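(* Let $p,k$ be fixed positive integers. There exists $r_0$ such that for every $r\geq r_0$, every $r$-uniform hypergraph $\mathcal H$ with $\Delta_p(\mathcal H)\leq k$ admits a $p$-equitable orientation.
   Context: An $r$-uniform hypergraph $\mathcal H$ is a finite set of $r$-element subsets (edges) of a finite vertex set $V(\mathcal H)$. An orientation of $\mathcal H$ assigns to every edge $S\in\mathcal H$ a bijection $\sigma_S:S\to[r]=\{1,\dots,r\}$ (a total order on its elements). For $U\subseteq V(\mathcal H)$ and $P\subseteq[r]$ with $|U|=|P|$, the degree of $U$ with respect to the set of positions $P$ is $d_P(U)=|\{S\in\mathcal H: U\subseteq S \text{ and } \sigma_S(U)=P\}|$. The orientation is $p$-equitable if $|d_P(U)-d_{P'}(U)|\leq 1$ for every $U\subseteq V(\mathcal H)$ and all $P,P'\subseteq[r]$ with $|U|=|P|=|P'|=p$. Finally, $\Delta_p(\mathcal H)=\max_{U\subseteq V(\mathcal H),\,|U|=p}|\{S\in\mathcal H: U\subseteq S\}|$. *)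

theory Defs
  imports Main
begin

text \<open>The vertex set is taken to be the union of the edges (vertices outside all edges
  have all degrees zero and do not affect any notion below).\<close>
definition uniform_hypergraph :: "nat \<Rightarrow> 'a set set \<Rightarrow> bool" where
  "uniform_hypergraph r H \<longleftrightarrow> finite H \<and> (\<forall>S\<in>H. finite S \<and> card S = r)"

definition vertices :: "'a set set \<Rightarrow> 'a set" where
  "vertices H = \<Union>H"

definition orientation :: "nat \<Rightarrow> 'a set set \<Rightarrow> ('a set \<Rightarrow> 'a \<Rightarrow> nat) \<Rightarrow> bool" where
  "orientation r H \<sigma> \<longleftrightarrow> (\<forall>S\<in>H. bij_betw (\<sigma> S) S {1..r})"

definition pos_degree :: "'a set set \<Rightarrow> ('a set \<Rightarrow> 'a \<Rightarrow> nat) \<Rightarrow> nat set \<Rightarrow> 'a set \<Rightarrow> nat" where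
  "pos_degree H \<sigma> P U = card {S\<in>H. U \<subseteq> S \<and> \<sigma> S ` U = P}"

definition p_equitable :: "nat \<Rightarrow> nat \<Rightarrow> 'a set set \<Rightarrow> ('a set \<Rightarrow> 'a \<Rightarrow> nat) \<Rightarrow> bool" where
  "p_equitable p r H \<sigma> \<longleftrightarrow>
     (\<forall>U P P'. U \<subseteq> vertices H \<and> P \<subseteq> {1..r} \<and> P' \<subseteq> {1..r} \<and>
        card U = p \<and> card P = p \<and> card P' = p \<longrightarrow>
        \<bar>int (pos_degree H \<sigma> P U) - int (pos_degree H \<sigma> P' U)\<bar> \<le> 1)"

definition max_p_degree :: "nat \<Rightarrow> 'a set set \<Rightarrow> nat" where
  "max_p_degree p H = Max ({card {S\<in>H. U \<subseteq> S} | U. U \<subseteq> vertices H \<and> card U = p} \<union> {0})"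

end

theory Submission
  imports Defs Complex_Main "HOL-Library.FuncSet" "HOL-Combinatorics.Permutations"
begin

text \<open>Orient every edge uniformly at random and call \<open>(U, S, S', Q)\<close> a collision if \<open>U\<close> occupies
  the same positions \<open>Q\<close> in two edges \<open>S \<noteq> S'\<close>. An orientation without collisions has all
  \<open>d_P(U) \<le> 1\<close> and is therefore \<open>p\<close>-equitable. Reorienting \<open>S\<close> and \<open>S'\<close> by permutations of the
  positions shows that, conditioned on avoiding any family of non-neighbouring collisions, a collision has
  probability at most \<open>1 / (r choose p)\<^sup>2\<close>, while a collision has at most
  \<open>8 p (r-1 choose p-1) k (r choose p)\<close> neighbours. Since \<open>p (r choose p) = r (r-1 choose p-1)\<close>,
  the (counting) local lemma applies as soon as \<open>r \<ge> 32 k p\<^sup>2\<close>.\<close>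

section \<open>A counting local lemma\<close>

definition avoiding :: "'w set \<Rightarrow> ('i \<Rightarrow> 'w set) \<Rightarrow> 'i set \<Rightarrow> 'w set" where
  "avoiding \<Omega> A J = {w \<in> \<Omega>. \<forall>j\<in>J. w \<notin> A j}"

lemma avoiding_antimono: "J \<subseteq> J' \<Longrightarrow> avoiding \<Omega> A J' \<subseteq> avoiding \<Omega> A J"
  unfolding avoiding_def by auto

lemma avoiding_insert: "avoiding \<Omega> A (insert i J) = avoiding \<Omega> A J - A i"
  unfolding avoiding_def by auto

lemma finite_avoiding: "finite \<Omega> \<Longrightarrow> finite (avoiding \<Omega> A J)"
  unfolding avoiding_def by simp

locale counting_local_lemma =
  fixes \<Omega> :: "'w set" and E :: "'i set" and A :: "'i \<Rightarrow> 'w set" and N :: "'i \<Rightarrow> 'i set"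
    and d :: nat and \<epsilon> :: real
  assumes finite_\<Omega>: "finite \<Omega>" and finite_E: "finite E"
    and finite_N: "\<And>i. i \<in> E \<Longrightarrow> finite (N i)"
    and card_N: "\<And>i. i \<in> E \<Longrightarrow> card (N i) \<le> d"
    and independent_bound: "\<And>i J. i \<in> E \<Longrightarrow> J \<subseteq> E - N i - {i} \<Longrightarrow>
      card (A i \<inter> avoiding \<Omega> A J) \<le> \<epsilon> * card (avoiding \<Omega> A J)"
    and \<epsilon>_nonneg: "0 \<le> \<epsilon>" and \<epsilon>_small: "4 * \<epsilon> * d \<le> 1"
    and \<epsilon>_half: "2 * \<epsilon> < 1"
begin

lemma card_avoiding_le_twice:
  assumes "finite J1" "card J1 \<le> d"
    and small: "\<And>j. j \<in> J1 \<Longrightarrow> card (A j \<inter> avoiding \<Omega> A J2) \<le> 2 * \<epsilon> * card (avoiding \<Omega> A J2)"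
  shows "card (avoiding \<Omega> A J2) \<le> 2 * card (avoiding \<Omega> A (J1 \<union> J2))"
proof -
  let ?Y = "avoiding \<Omega> A (J1 \<union> J2)" and ?Y2 = "avoiding \<Omega> A J2"
  have "?Y2 \<subseteq> ?Y \<union> (\<Union>j\<in>J1. A j \<inter> ?Y2)"
    unfolding avoiding_def by auto
  then have "card ?Y2 \<le> card (?Y \<union> (\<Union>j\<in>J1. A j \<inter> ?Y2))"
    using finite_avoiding[OF finite_\<Omega>] assms(1) by (intro card_mono) auto
  also have "\<dots> \<le> card ?Y + card (\<Union>j\<in>J1. A j \<inter> ?Y2)"
    by (rule card_Un_le)
  also have "\<dots> \<le> card ?Y + (\<Sum>j\<in>J1. card (A j \<inter> ?Y2))"
    using assms(1) by (intro add_left_mono card_UN_le)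
  finally have "real (card ?Y2) \<le> card ?Y + (\<Sum>j\<in>J1. real (card (A j \<inter> ?Y2)))"
    by (metis of_nat_add of_nat_le_iff of_nat_sum)
  also have "\<dots> \<le> card ?Y + card J1 * (2 * \<epsilon> * card ?Y2)"
    using small sum_bounded_above[of J1 "\<lambda>j. real (card (A j \<inter> ?Y2))"] by simp
  also have "\<dots> \<le> card ?Y + d * (2 * \<epsilon> * card ?Y2)"
    using assms(2) \<epsilon>_nonneg by (intro add_left_mono mult_right_mono) auto
  also have "d * (2 * \<epsilon> * card ?Y2) = (4 * \<epsilon> * d) * card ?Y2 / 2"
    by simp
  also have "\<dots> \<le> card ?Y2 / 2"
    using mult_right_mono[OF \<epsilon>_small, of "card ?Y2"] by simp
  finally show ?thesis
    by simp
qed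

text \<open>Split \<open>J\<close> into the neighbours \<open>J1\<close> of \<open>i\<close> and the rest \<open>J2\<close>. By induction each event of
  \<open>J1\<close> takes at most a \<open>2\<epsilon>\<close>-fraction of \<open>avoiding J2\<close>, so avoiding \<open>J1\<close> as well loses at most half
  of it, which turns the bound \<open>\<epsilon>\<close> relative to \<open>J2\<close> into \<open>2\<epsilon>\<close> relative to \<open>J\<close>.\<close>
lemma conditional_bound:
  assumes "J \<subseteq> E" "i \<in> E - J"
  shows "card (A i \<inter> avoiding \<Omega> A J) \<le> 2 * \<epsilon> * card (avoiding \<Omega> A J)"
  using assms
proof (induction "card J" arbitrary: J i rule: less_induct)
  case less
  define J1 where "J1 = J \<inter> N i"
  define J2 where "J2 = J - N i"
  let ?Y = "avoiding \<Omega> A J" and ?Y2 = "avoiding \<Omega> A J2"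
  have i: "i \<in> E" and "finite J" and J_split: "J = J1 \<union> J2"
    using less.prems finite_E finite_subset by (auto simp: J1_def J2_def)
  have "J2 \<subseteq> E - N i - {i}"
    using less.prems by (auto simp: J2_def)
  then have "card (A i \<inter> ?Y2) \<le> \<epsilon> * card ?Y2"
    by (rule independent_bound[OF i])
  moreover have "?Y \<subseteq> ?Y2"
    by (rule avoiding_antimono) (auto simp: J2_def)
  then have "card (A i \<inter> ?Y) \<le> card (A i \<inter> ?Y2)"
    using finite_avoiding[OF finite_\<Omega>] by (intro card_mono) auto
  moreover have "card ?Y2 \<le> 2 * card ?Y"
  proof (cases "J1 = {}")
    case True
    then show ?thesis
      using J_split by simp
  next
    case False
    then have "card J2 < card J"
      using \<open>finite J\<close> by (intro psubset_card_mono) (auto simp: J1_def J2_def)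
    then have IH: "card (A j \<inter> ?Y2) \<le> 2 * \<epsilon> * card ?Y2" if "j \<in> J1" for j
      using less.hyps[of J2 j] less.prems that by (auto simp: J1_def J2_def)
    have "finite J1"
      using \<open>finite J\<close> by (simp add: J1_def)
    moreover have "card J1 \<le> d"
      using card_mono[OF finite_N[OF i], of J1] card_N[OF i] by (auto simp: J1_def)
    ultimately have "card ?Y2 \<le> 2 * card (avoiding \<Omega> A (J1 \<union> J2))"
      using IH by (rule card_avoiding_le_twice)
    with J_split show ?thesis
      by simp
  qed
  then have "\<epsilon> * card ?Y2 \<le> \<epsilon> * (2 * card ?Y)"
    using \<epsilon>_nonneg by (intro mult_left_mono) auto
  ultimately show ?case
    by linarith
qed

lemma card_avoiding_lower_bound:
  assumes "J \<subseteq> E"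
  shows "(1 - 2 * \<epsilon>) ^ card J * card \<Omega> \<le> card (avoiding \<Omega> A J)"
  using finite_subset[OF assms finite_E] assms
proof (induction J rule: finite_induct)
  case empty
  then show ?case by (simp add: avoiding_def)
next
  case (insert i J)
  let ?Y = "avoiding \<Omega> A J"
  have finite_Y: "finite ?Y"
    by (rule finite_avoiding[OF finite_\<Omega>])
  have "card (avoiding \<Omega> A (insert i J)) = card ?Y - card (A i \<inter> ?Y)"
    using card_Diff_subset_Int[of ?Y "A i"] finite_Y
    by (simp add: avoiding_insert Int_commute)
  moreover have "card (A i \<inter> ?Y) \<le> card ?Y"
    using finite_Y by (intro card_mono) auto
  ultimately have "(1 - 2 * \<epsilon>) * card ?Y \<le> card (avoiding \<Omega> A (insert i J))"
    using conditional_bound[of J i] insert by (simp add: of_nat_diff left_diff_distrib)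
  moreover have "(1 - 2 * \<epsilon>) ^ card J * card \<Omega> \<le> card ?Y"
    using insert by simp
  then have "(1 - 2 * \<epsilon>) ^ card (insert i J) * card \<Omega> \<le> (1 - 2 * \<epsilon>) * card ?Y"
    using insert \<epsilon>_half by (simp add: mult.assoc mult_left_mono)
  ultimately show ?case
    by linarith
qed

theorem avoiding_nonempty:
  assumes "\<Omega> \<noteq> {}"
  shows "avoiding \<Omega> A E \<noteq> {}"
proof -
  have "0 < (1 - 2 * \<epsilon>) ^ card E * card \<Omega>"
    using assms finite_\<Omega> \<epsilon>_half by (simp add: card_gt_0_iff)
  then show ?thesis
    using card_avoiding_lower_bound[of E] by auto
qed

end

section \<open>Exchange permutations\<close>

lemma exchange_permutation:
  fixes Q Q' :: "'a set"
  assumes "finite Q" "finite Q'" "card Q = card Q'"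
  obtains \<pi> where "\<pi> permutes Q \<union> Q'" "\<pi> ` Q = Q'" "\<pi> ` (Q' - Q) = Q - Q'"
proof -
  have "card (Q - Q') = card (Q' - Q)"
    using assms card_Diff_subset_Int[of Q Q'] card_Diff_subset_Int[of Q' Q] by (simp add: Int_commute)
  then obtain h where h: "bij_betw h (Q - Q') (Q' - Q)"
    using assms finite_same_card_bij by (meson finite_Diff)
  define g where "g = the_inv_into (Q - Q') h"
  have g: "bij_betw g (Q' - Q) (Q - Q')"
    unfolding g_def using h by (rule bij_betw_the_inv_into)
  define \<pi> where "\<pi> x = (if x \<in> Q - Q' then h x else if x \<in> Q' - Q then g x else x)" for x
  have "bij_betw \<pi> (Q - Q') (Q' - Q)"
    using h by (rule bij_betw_cong[THEN iffD1, rotated]) (simp add: \<pi>_def)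
  moreover have "bij_betw \<pi> (Q' - Q) (Q - Q')"
    using g by (rule bij_betw_cong[THEN iffD1, rotated]) (auto simp: \<pi>_def)
  moreover have "bij_betw \<pi> (Q \<inter> Q') (Q \<inter> Q')"
    by (rule bij_betw_cong[THEN iffD1, rotated, OF bij_betw_id]) (simp add: \<pi>_def)
  ultimately have "bij_betw \<pi> ((Q - Q') \<union> (Q' - Q) \<union> (Q \<inter> Q')) ((Q' - Q) \<union> (Q - Q') \<union> (Q \<inter> Q'))"
    by (intro bij_betw_combine) auto
  moreover have "(Q - Q') \<union> (Q' - Q) \<union> (Q \<inter> Q') = Q \<union> Q'"
    by auto
  ultimately have "\<pi> permutes Q \<union> Q'"
    by (intro bij_imp_permutes) (auto simp: \<pi>_def Un_commute)
  moreover have "\<pi> ` Q = Q'"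
  proof -
    have "\<pi> ` Q = \<pi> ` (Q - Q') \<union> \<pi> ` (Q \<inter> Q')"
      by (metis Diff_partition Int_lower1 image_Un Un_Diff_Int)
    also have "\<dots> = (Q' - Q) \<union> (Q \<inter> Q')"
      using \<open>bij_betw \<pi> (Q - Q') (Q' - Q)\<close> \<open>bij_betw \<pi> (Q \<inter> Q') (Q \<inter> Q')\<close>
      by (simp add: bij_betw_def)
    finally show ?thesis by auto
  qed
  moreover have "\<pi> ` (Q' - Q) = Q - Q'"
    using \<open>bij_betw \<pi> (Q' - Q) (Q - Q')\<close> by (simp add: bij_betw_def)
  ultimately show ?thesis using that by blast
qed

lemma permutes_image_fixed:
  assumes "\<pi> permutes Q \<union> Q'" "\<pi> ` (Q' - Q) \<subseteq> Q" "W \<inter> Q = {}" "\<pi> ` W \<inter> Q = {}"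
  shows "\<pi> ` W = W"
proof -
  have "\<pi> w = w" if "w \<in> W" for w
  proof -
    have "w \<notin> Q' - Q"
      using assms(2,4) that by blast
    then show ?thesis
      using assms(1,3) that by (auto intro: permutes_not_in)
  qed
  then show ?thesis by simp
qed

section \<open>Orientations\<close>

text \<open>Orientations are taken extensional, so that they form a finite space in which the local
  lemma can count.\<close>
definition edge_numberings :: "nat \<Rightarrow> 'a set \<Rightarrow> ('a \<Rightarrow> nat) set" where
  "edge_numberings r S = {f \<in> extensional S. bij_betw f S {1..r}}"

definition orientations :: "nat \<Rightarrow> 'a set set \<Rightarrow> ('a set \<Rightarrow> 'a \<Rightarrow> nat) set" where
  "orientations r H = (\<Pi>\<^sub>E S\<in>H. edge_numberings r S)"

lemma orientation_if_in_orientations: "\<sigma> \<in> orientations r H \<Longrightarrow> orientation r H \<sigma>"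
  unfolding orientations_def orientation_def edge_numberings_def by auto

lemma inj_on_orientation: "\<sigma> \<in> orientations r H \<Longrightarrow> S \<in> H \<Longrightarrow> inj_on (\<sigma> S) S"
  unfolding orientations_def edge_numberings_def bij_betw_def by auto

lemma finite_orientations:
  assumes "uniform_hypergraph r H"
  shows "finite (orientations r H)"
proof -
  have "finite (edge_numberings r S)" if "finite S" for S :: "'a set"
  proof (rule finite_subset)
    show "edge_numberings r S \<subseteq> (\<Pi>\<^sub>E x\<in>S. {1..r})"
      unfolding edge_numberings_def by (auto simp: PiE_iff extensional_def dest: bij_betwE)
    show "finite (\<Pi>\<^sub>E x\<in>S. {1..r})"
      using that by (simp add: finite_PiE)
  qed
  then show ?thesis
    using assms unfolding orientations_def uniform_hypergraph_def by (intro finite_PiE) auto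
qed

lemma orientations_nonempty:
  assumes "uniform_hypergraph r H"
  shows "orientations r H \<noteq> {}"
proof -
  have "edge_numberings r S \<noteq> {}" if "S \<in> H" for S
  proof -
    have "finite S" "card S = r"
      using assms that by (auto simp: uniform_hypergraph_def)
    then obtain h where "bij_betw h S {1..r}"
      using finite_same_card_bij[of S "{1..r}"] by auto
    then have "restrict h S \<in> edge_numberings r S"
      unfolding edge_numberings_def by simp
    then show ?thesis by auto
  qed
  then show ?thesis
    unfolding orientations_def by (auto simp: PiE_eq_empty_iff)
qed

definition reorient :: "('a set \<Rightarrow> 'a \<Rightarrow> nat) \<Rightarrow> 'a set \<Rightarrow> (nat \<Rightarrow> nat) \<Rightarrow> 'a set \<Rightarrow> 'a \<Rightarrow> nat" where
  "reorient \<sigma> S \<pi> = \<sigma>(S := restrict (\<pi> \<circ> \<sigma> S) S)"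

lemma reorient_other: "T \<noteq> S \<Longrightarrow> reorient \<sigma> S \<pi> T = \<sigma> T"
  by (simp add: reorient_def)

lemma image_reorient: "U \<subseteq> S \<Longrightarrow> reorient \<sigma> S \<pi> S ` U = \<pi> ` \<sigma> S ` U"
  unfolding reorient_def by (simp add: image_comp subset_eq)

lemma reorient_in_orientations:
  assumes "\<sigma> \<in> orientations r H" "S \<in> H" "\<pi> permutes {1..r}"
  shows "reorient \<sigma> S \<pi> \<in> orientations r H"
proof -
  have "bij_betw (\<sigma> S) S {1..r}"
    using assms(1,2) by (auto simp: orientations_def edge_numberings_def)
  then have "bij_betw (\<pi> \<circ> \<sigma> S) S {1..r}"
    using permutes_imp_bij[OF assms(3)] by (rule bij_betw_trans)
  then have "restrict (\<pi> \<circ> \<sigma> S) S \<in> edge_numberings r S"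
    unfolding edge_numberings_def by simp
  then show ?thesis
    using assms(1,2) unfolding orientations_def reorient_def by (auto simp: PiE_iff extensional_def)
qed

lemma inj_on_reorient:
  assumes "inj \<pi>" "S \<in> H"
  shows "inj_on (\<lambda>\<sigma>. reorient \<sigma> S \<pi>) (orientations r H)"
proof (rule inj_onI)
  fix \<sigma> \<tau> assume \<sigma>: "\<sigma> \<in> orientations r H" and \<tau>: "\<tau> \<in> orientations r H"
    and eq: "reorient \<sigma> S \<pi> = reorient \<tau> S \<pi>"
  have "\<sigma> S x = \<tau> S x" for x
  proof (cases "x \<in> S")
    case True
    then show ?thesis
      using fun_cong[OF fun_cong[OF eq, of S], of x] assms by (simp add: reorient_def inj_eq)
  next
    case False
    then show ?thesis
      using \<sigma> \<tau> assms(2) by (auto simp: orientations_def edge_numberings_def PiE_iff extensional_def)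
  qed
  moreover have "\<sigma> T = \<tau> T" if "T \<noteq> S" for T
    using fun_cong[OF eq, of T] that by (simp add: reorient_other)
  ultimately show "\<sigma> = \<tau>"
    by (metis ext)
qed

lemma image_eq_if_image_reorient_eq:
  assumes \<sigma>: "\<sigma> \<in> orientations r H" and "S \<in> H" "U \<subseteq> S" "\<sigma> S ` U = Q"
    and \<pi>: "\<pi> permutes Q \<union> Q1" "\<pi> ` (Q1 - Q) \<subseteq> Q"
    and "T \<in> H" "U' \<subseteq> T" "T = S \<Longrightarrow> U \<inter> U' = {} \<and> Q \<inter> Q' = {}"
    and "reorient \<sigma> S \<pi> T ` U' = Q'"
  shows "\<sigma> T ` U' = Q'"
proof (cases "T = S")
  case True
  have "\<sigma> S ` U' \<inter> \<sigma> S ` U = \<sigma> S ` (U' \<inter> U)"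
    using assms True by (intro inj_on_image_Int[symmetric, OF inj_on_orientation[OF \<sigma>]]) auto
  then have "\<sigma> S ` U' \<inter> Q = {}"
    using assms True by auto
  moreover have "\<pi> ` \<sigma> S ` U' = Q'"
    using assms True by (simp add: image_reorient)
  ultimately have "\<pi> ` \<sigma> S ` U' = \<sigma> S ` U'"
    using assms(9) True by (intro permutes_image_fixed[OF \<pi>]) auto
  then show ?thesis
    using \<open>\<pi> ` \<sigma> S ` U' = Q'\<close> True by simp
next
  case False
  then show ?thesis
    using assms by (simp add: reorient_other)
qed

section \<open>Collisions\<close>

definition collisions :: "nat \<Rightarrow> nat \<Rightarrow> 'a set set \<Rightarrow> ('a set \<times> 'a set \<times> 'a set \<times> nat set) set" where
  "collisions p r H = {(U, S, S', Q). S \<in> H \<and> S' \<in> H \<and> S \<noteq> S' \<and> U \<subseteq> S \<and> U \<subseteq> S' \<and> card U = p \<and>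
     Q \<subseteq> {1..r} \<and> card Q = p}"

fun collision_event :: "'a set \<times> 'a set \<times> 'a set \<times> nat set \<Rightarrow> ('a set \<Rightarrow> 'a \<Rightarrow> nat) set" where
  "collision_event (U, S, S', Q) = {\<sigma>. \<sigma> S ` U = Q \<and> \<sigma> S' ` U = Q}"

fun collision_nbrs ::
  "nat \<Rightarrow> nat \<Rightarrow> 'a set set \<Rightarrow> 'a set \<times> 'a set \<times> 'a set \<times> nat set \<Rightarrow> ('a set \<times> 'a set \<times> 'a set \<times> nat set) set"
where
  "collision_nbrs p r H (U, S, S', Q) = {(U', T, T', Q') \<in> collisions p r H.
     (T \<in> {S, S'} \<or> T' \<in> {S, S'}) \<and> (U \<inter> U' \<noteq> {} \<or> Q \<inter> Q' \<noteq> {})}"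

lemma finite_collisions:
  assumes "uniform_hypergraph r H"
  shows "finite (collisions p r H)"
proof (rule finite_subset)
  show "collisions p r H \<subseteq> Pow (\<Union>H) \<times> H \<times> H \<times> Pow {1..r}"
    by (auto simp: collisions_def)
  show "finite (Pow (\<Union>H) \<times> H \<times> H \<times> Pow {1..r})"
    using assms by (auto simp: uniform_hypergraph_def)
qed

lemma collision_nbrs_subset: "collision_nbrs p r H i \<subseteq> collisions p r H"
  by (cases i) auto

text \<open>Reorienting \<open>S\<close> and \<open>S'\<close> by exchange permutations moving \<open>Q\<close> to \<open>Q1\<close> and \<open>Q2\<close> maps the
  orientations in the collision \<open>(U, S, S', Q)\<close> injectively to orientations placing \<open>U\<close> at \<open>Q1\<close> in
  \<open>S\<close> and at \<open>Q2\<close> in \<open>S'\<close>, and it preserves avoidance of every non-neighbouring collision.\<close>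
locale collision_switch =
  fixes r p :: nat and H :: "'a set set" and U S S' :: "'a set" and Q Q1 Q2 :: "nat set"
    and \<pi>1 \<pi>2 :: "nat \<Rightarrow> nat"
  assumes collision: "(U, S, S', Q) \<in> collisions p r H"
    and positions: "Q1 \<subseteq> {1..r}" "Q2 \<subseteq> {1..r}"
    and \<pi>1: "\<pi>1 permutes Q \<union> Q1" "\<pi>1 ` Q = Q1" "\<pi>1 ` (Q1 - Q) = Q - Q1"
    and \<pi>2: "\<pi>2 permutes Q \<union> Q2" "\<pi>2 ` Q = Q2" "\<pi>2 ` (Q2 - Q) = Q - Q2"
begin

definition switch :: "('a set \<Rightarrow> 'a \<Rightarrow> nat) \<Rightarrow> 'a set \<Rightarrow> 'a \<Rightarrow> nat" where
  "switch \<sigma> = reorient (reorient \<sigma> S \<pi>1) S' \<pi>2"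

lemma edges: "S \<in> H" "S' \<in> H" "S \<noteq> S'" "U \<subseteq> S" "U \<subseteq> S'"
  using collision by (auto simp: collisions_def)

lemma permutes_positions: "\<pi>1 permutes {1..r}" "\<pi>2 permutes {1..r}"
  using \<pi>1(1) \<pi>2(1) collision positions by (auto simp: collisions_def intro: permutes_subset)

lemma switch_in_orientations: "\<sigma> \<in> orientations r H \<Longrightarrow> switch \<sigma> \<in> orientations r H"
  unfolding switch_def using edges permutes_positions by (intro reorient_in_orientations) auto

lemma inj_on_switch: "inj_on switch (orientations r H)"
proof -
  have "inj_on (\<lambda>\<sigma>. reorient \<sigma> S' \<pi>2) ((\<lambda>\<sigma>. reorient \<sigma> S \<pi>1) ` orientations r H)"
    using permutes_positions edges
    by (intro inj_on_subset[OF inj_on_reorient[OF permutes_inj[OF permutes_positions(2)] edges(2)]])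
      (auto intro: reorient_in_orientations)
  moreover have "switch = (\<lambda>\<sigma>. reorient \<sigma> S' \<pi>2) \<circ> (\<lambda>\<sigma>. reorient \<sigma> S \<pi>1)"
    by (simp add: switch_def fun_eq_iff)
  ultimately show ?thesis
    using comp_inj_on[OF inj_on_reorient[OF permutes_inj[OF permutes_positions(1)] edges(1)]] by simp
qed

lemma image_switch: "switch \<sigma> S ` U = \<pi>1 ` \<sigma> S ` U" "switch \<sigma> S' ` U = \<pi>2 ` \<sigma> S' ` U"
  using edges by (simp_all add: switch_def reorient_other image_reorient)

lemma image_eq_if_image_switch_eq:
  assumes \<sigma>: "\<sigma> \<in> orientations r H" "\<sigma> \<in> collision_event (U, S, S', Q)"
    and "X \<in> H" "U' \<subseteq> X" "X \<in> {S, S'} \<Longrightarrow> U \<inter> U' = {} \<and> Q \<inter> Q' = {}"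
    and "switch \<sigma> X ` U' = Q'"
  shows "\<sigma> X ` U' = Q'"
proof -
  have "\<sigma> S ` U = Q" "reorient \<sigma> S \<pi>1 S' ` U = Q"
    using \<sigma>(2) edges by (simp_all add: reorient_other)
  moreover have "\<pi>1 ` (Q1 - Q) \<subseteq> Q" "\<pi>2 ` (Q2 - Q) \<subseteq> Q"
    using \<pi>1(3) \<pi>2(3) by auto
  moreover have "X = S \<Longrightarrow> U \<inter> U' = {} \<and> Q \<inter> Q' = {}" "X = S' \<Longrightarrow> U \<inter> U' = {} \<and> Q \<inter> Q' = {}"
    using assms(5) by auto
  ultimately have "reorient \<sigma> S \<pi>1 X ` U' = Q'"
    using assms(6) unfolding switch_def
    by (intro image_eq_if_image_reorient_eq[OF reorient_in_orientations[OF \<sigma>(1) edges(1) permutes_positions(1)]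
          edges(2) edges(5) _ \<pi>2(1) _ assms(3,4)])
  then show ?thesis
    using \<open>\<sigma> S ` U = Q\<close> \<open>\<pi>1 ` (Q1 - Q) \<subseteq> Q\<close> \<open>X = S \<Longrightarrow> U \<inter> U' = {} \<and> Q \<inter> Q' = {}\<close>
    by (intro image_eq_if_image_reorient_eq[OF \<sigma>(1) edges(1) edges(4) _ \<pi>1(1) _ assms(3,4)])
qed

lemma switch_avoiding:
  assumes J: "J \<subseteq> collisions p r H - collision_nbrs p r H (U, S, S', Q)"
    and \<sigma>: "\<sigma> \<in> collision_event (U, S, S', Q) \<inter> avoiding (orientations r H) collision_event J"
  shows "switch \<sigma> \<in> avoiding (orientations r H) collision_event J"
proof -
  have \<sigma>_orientation: "\<sigma> \<in> orientations r H" and \<sigma>_avoids: "\<forall>j\<in>J. \<sigma> \<notin> collision_event j"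
    and \<sigma>_collision: "\<sigma> \<in> collision_event (U, S, S', Q)"
    using \<sigma> by (auto simp: avoiding_def)
  have "switch \<sigma> \<notin> collision_event j" if "j \<in> J" for j
  proof
    assume switched: "switch \<sigma> \<in> collision_event j"
    obtain U' T T' Q' where j: "j = (U', T, T', Q')"
      by (cases j)
    have j_edges: "T \<in> H" "T' \<in> H" "U' \<subseteq> T" "U' \<subseteq> T'"
      and j_far: "T \<in> {S, S'} \<or> T' \<in> {S, S'} \<Longrightarrow> U \<inter> U' = {} \<and> Q \<inter> Q' = {}"
      using J \<open>j \<in> J\<close> by (auto simp: j collisions_def)
    have switched_at: "switch \<sigma> T ` U' = Q'" "switch \<sigma> T' ` U' = Q'"
      using switched by (simp_all add: j)
    have "\<sigma> T ` U' = Q'"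
      using j_far by (intro image_eq_if_image_switch_eq[OF \<sigma>_orientation \<sigma>_collision j_edges(1,3) _
            switched_at(1)]) auto
    moreover have "\<sigma> T' ` U' = Q'"
      using j_far by (intro image_eq_if_image_switch_eq[OF \<sigma>_orientation \<sigma>_collision j_edges(2,4) _
            switched_at(2)]) auto
    ultimately have "\<sigma> \<in> collision_event j"
      by (simp add: j)
    then show False
      using \<sigma>_avoids \<open>j \<in> J\<close> by blast
  qed
  then show ?thesis
    using switch_in_orientations[OF \<sigma>_orientation] by (simp add: avoiding_def)
qed

end

lemma switching_bound:
  assumes H: "uniform_hypergraph r H"
    and i: "(U, S, S', Q) \<in> collisions p r H"
    and J: "J \<subseteq> collisions p r H - collision_nbrs p r H (U, S, S', Q)"
    and Q1: "Q1 \<subseteq> {1..r}" "card Q1 = p" and Q2: "Q2 \<subseteq> {1..r}" "card Q2 = p"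
  shows "card (collision_event (U, S, S', Q) \<inter> avoiding (orientations r H) collision_event J)
    \<le> card {\<sigma> \<in> avoiding (orientations r H) collision_event J. \<sigma> S ` U = Q1 \<and> \<sigma> S' ` U = Q2}"
    (is "card ?X \<le> card ?T")
proof -
  have Q: "Q \<subseteq> {1..r}" "card Q = p"
    using i by (auto simp: collisions_def)
  then have "finite Q" "finite Q1" "finite Q2"
    using Q1(1) Q2(1) by (auto intro: finite_subset)
  obtain \<pi>1 where \<pi>1: "\<pi>1 permutes Q \<union> Q1" "\<pi>1 ` Q = Q1" "\<pi>1 ` (Q1 - Q) = Q - Q1"
    using exchange_permutation[OF \<open>finite Q\<close> \<open>finite Q1\<close>] Q Q1 by metis
  obtain \<pi>2 where \<pi>2: "\<pi>2 permutes Q \<union> Q2" "\<pi>2 ` Q = Q2" "\<pi>2 ` (Q2 - Q) = Q - Q2"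
    using exchange_permutation[OF \<open>finite Q\<close> \<open>finite Q2\<close>] Q Q2 by metis
  interpret collision_switch r p H U S S' Q Q1 Q2 \<pi>1 \<pi>2
    using i Q1 Q2 \<pi>1 \<pi>2 by unfold_locales
  have "switch \<sigma> \<in> ?T" if "\<sigma> \<in> ?X" for \<sigma>
  proof -
    have "\<sigma> S ` U = Q" "\<sigma> S' ` U = Q"
      using that by auto
    then show ?thesis
      using switch_avoiding[OF J that] image_switch \<pi>1(2) \<pi>2(2) by simp
  qed
  then have "switch ` ?X \<subseteq> ?T"
    by blast
  moreover have "inj_on switch ?X"
    using inj_on_switch by (rule inj_on_subset) (auto simp: avoiding_def)
  moreover have "finite ?T"
    using finite_orientations[OF H] by (auto simp: avoiding_def)
  ultimately show ?thesis
    by (intro card_inj_on_le)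
qed

lemma collision_event_conditional_bound:
  assumes H: "uniform_hypergraph r H" and i: "i \<in> collisions p r H"
    and J: "J \<subseteq> collisions p r H - collision_nbrs p r H i"
  shows "card (collision_event i \<inter> avoiding (orientations r H) collision_event J)
    \<le> 1 / (real (r choose p))\<^sup>2 * card (avoiding (orientations r H) collision_event J)"
proof -
  obtain U S S' Q where i_def: "i = (U, S, S', Q)"
    by (cases i)
  define P where "P = {Q. Q \<subseteq> {1..r} \<and> card Q = p}"
  define Y where "Y = avoiding (orientations r H) collision_event J"
  define T where "T q = {\<sigma> \<in> Y. \<sigma> S ` U = fst q \<and> \<sigma> S' ` U = snd q}" for q
  have "finite P"
    unfolding P_def by (rule finite_subset[of _ "Pow {1..r}"]) auto
  have "finite Y"
    unfolding Y_def by (rule finite_avoiding[OF finite_orientations[OF H]])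
  have "(r choose p)\<^sup>2 * card (collision_event i \<inter> Y) = (\<Sum>q\<in>P \<times> P. card (collision_event i \<inter> Y))"
    using n_subsets[of "{1..r}" p] by (simp add: P_def card_cartesian_product power2_eq_square)
  also have "\<dots> \<le> (\<Sum>q\<in>P \<times> P. card (T q))"
    using switching_bound[OF H i[unfolded i_def] J[unfolded i_def]]
    by (intro sum_mono) (auto simp: P_def T_def Y_def i_def)
  also have "\<dots> = card (\<Union>q\<in>P \<times> P. T q)"
    using \<open>finite P\<close> \<open>finite Y\<close>
    by (intro card_UN_disjoint[symmetric]) (auto simp: T_def prod_eq_iff)
  also have "\<dots> \<le> card Y"
    using \<open>finite Y\<close> by (intro card_mono) (auto simp: T_def)
  finally have "(real (r choose p))\<^sup>2 * card (collision_event i \<inter> Y) \<le> card Y"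
    by (metis of_nat_le_iff of_nat_mult of_nat_power)
  moreover have "Q \<subseteq> {1..r}" "card Q = p"
    using i by (auto simp: i_def collisions_def)
  then have "p \<le> r"
    using card_mono[of "{1..r}" Q] by simp
  ultimately show ?thesis
    by (simp add: Y_def field_simps)
qed
section \<open>Counting neighbours\<close>

lemma card_subsets_containing_le:
  assumes "finite X"
  shows "card {U'. U' \<subseteq> X \<and> card U' = p \<and> u \<in> U'} \<le> card (X - {u}) choose (p - 1)"
proof -
  let ?V = "{V. V \<subseteq> X - {u} \<and> card V = p - 1}"
  have "{U'. U' \<subseteq> X \<and> card U' = p \<and> u \<in> U'} \<subseteq> insert u ` ?V"
  proof
    fix U' assume U': "U' \<in> {U'. U' \<subseteq> X \<and> card U' = p \<and> u \<in> U'}"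
    then have "finite U'"
      using assms by (auto intro: finite_subset)
    then have "U' - {u} \<in> ?V"
      using U' by auto
    moreover have "U' = insert u (U' - {u})"
      using U' by auto
    ultimately show "U' \<in> insert u ` ?V"
      by blast
  qed
  moreover have "finite ?V"
    by (rule finite_subset[of _ "Pow X"]) (use assms in auto)
  ultimately have "card {U'. U' \<subseteq> X \<and> card U' = p \<and> u \<in> U'} \<le> card (insert u ` ?V)"
    by (intro card_mono finite_imageI)
  also have "\<dots> \<le> card ?V"
    by (rule card_image_le) fact
  also have "\<dots> = card (X - {u}) choose (p - 1)"
    using assms by (simp add: n_subsets)
  finally show ?thesis .
qed

lemma card_subsets_meeting_le:
  assumes "finite X" "card X = r" "U \<subseteq> X" "card U = p"
  shows "card {U'. U' \<subseteq> X \<and> card U' = p \<and> U \<inter> U' \<noteq> {}} \<le> p * (r - 1 choose (p - 1))"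
proof -
  have "finite U"
    using assms(1,3) by (rule finite_subset[rotated])
  have "{U'. U' \<subseteq> X \<and> card U' = p \<and> U \<inter> U' \<noteq> {}} = (\<Union>u\<in>U. {U'. U' \<subseteq> X \<and> card U' = p \<and> u \<in> U'})"
    by auto
  then have "card {U'. U' \<subseteq> X \<and> card U' = p \<and> U \<inter> U' \<noteq> {}}
      \<le> (\<Sum>u\<in>U. card {U'. U' \<subseteq> X \<and> card U' = p \<and> u \<in> U'})"
    using card_UN_le[OF \<open>finite U\<close>] by (simp only:)
  also have "\<dots> \<le> (\<Sum>u\<in>U. r - 1 choose (p - 1))"
  proof (rule sum_mono)
    fix u assume "u \<in> U"
    then have "card (X - {u}) = r - 1"
      using assms by (simp add: subset_iff)
    then show "card {U'. U' \<subseteq> X \<and> card U' = p \<and> u \<in> U'} \<le> r - 1 choose (p - 1)"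
      using card_subsets_containing_le[OF assms(1)] by metis
  qed
  also have "\<dots> = p * (r - 1 choose (p - 1))"
    using assms(4) by simp
  finally show ?thesis .
qed

lemma card_edges_containing_le_max_p_degree:
  assumes "uniform_hypergraph r H" "U \<subseteq> vertices H" "card U = p"
  shows "card {T \<in> H. U \<subseteq> T} \<le> max_p_degree p H"
proof -
  let ?D = "{card {T \<in> H. U \<subseteq> T} | U. U \<subseteq> vertices H \<and> card U = p} \<union> {0}"
  have "finite (vertices H)"
    using assms(1) by (auto simp: uniform_hypergraph_def vertices_def)
  have "?D \<subseteq> (\<lambda>U. card {T \<in> H. U \<subseteq> T}) ` Pow (vertices H) \<union> {0}"
    by auto
  then have "finite ?D"
    by (rule finite_subset) (use \<open>finite (vertices H)\<close> in simp)
  then show ?thesis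
    using assms(2,3) unfolding max_p_degree_def by (intro Max_ge) auto
qed

lemma card_Sigma_times_le:
  assumes "finite A" "finite C" "\<And>a. a \<in> A \<Longrightarrow> finite (B a)" "\<And>a. a \<in> A \<Longrightarrow> card (B a) \<le> k"
  shows "card (SIGMA a:A. B a \<times> C) \<le> card A * k * card C"
proof -
  have "card (SIGMA a:A. B a \<times> C) = (\<Sum>a\<in>A. card (B a) * card C)"
    using assms by (simp add: card_SigmaI card_cartesian_product)
  also have "\<dots> \<le> (\<Sum>a\<in>A. k * card C)"
    using assms(4) by (intro sum_mono mult_right_mono) auto
  finally show ?thesis
    by simp
qed

lemma card_collisions_through_le:
  assumes H: "uniform_hypergraph r H" and deg: "max_p_degree p H \<le> k"
    and "finite \<U>" "finite \<Q>" "\<And>U'. U' \<in> \<U> \<Longrightarrow> U' \<subseteq> vertices H \<and> card U' = p"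
  shows "card ((\<lambda>(U', T', Q'). (U', X, T', Q')) ` (SIGMA U':\<U>. {T \<in> H. U' \<subseteq> T} \<times> \<Q>))
    \<le> card \<U> * k * card \<Q>"
proof -
  have "finite H"
    using H by (simp add: uniform_hypergraph_def)
  have "card {T \<in> H. U' \<subseteq> T} \<le> k" if "U' \<in> \<U>" for U'
    using card_edges_containing_le_max_p_degree[OF H, of U' p] deg assms(5)[OF that] by simp
  then have "card (SIGMA U':\<U>. {T \<in> H. U' \<subseteq> T} \<times> \<Q>) \<le> card \<U> * k * card \<Q>"
    using \<open>finite H\<close> assms(3,4) by (intro card_Sigma_times_le) auto
  moreover have "card ((\<lambda>(U', T', Q'). (U', X, T', Q')) ` (SIGMA U':\<U>. {T \<in> H. U' \<subseteq> T} \<times> \<Q>))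
      \<le> card (SIGMA U':\<U>. {T \<in> H. U' \<subseteq> T} \<times> \<Q>)"
    by (rule card_image_le) (use \<open>finite H\<close> assms(3,4) in auto)
  ultimately show ?thesis
    by linarith
qed

definition collisions_from ::
  "nat \<Rightarrow> nat \<Rightarrow> 'a set set \<Rightarrow> 'a set \<Rightarrow> 'a set \<Rightarrow> nat set \<Rightarrow> ('a set \<times> 'a set \<times> 'a set \<times> nat set) set"
where
  "collisions_from p r H X U Q =
     {(U', T, T', Q') \<in> collisions p r H. T = X \<and> (U \<inter> U' \<noteq> {} \<or> Q \<inter> Q' \<noteq> {})}"

fun swap_edges :: "'a set \<times> 'a set \<times> 'a set \<times> nat set \<Rightarrow> 'a set \<times> 'a set \<times> 'a set \<times> nat set" where
  "swap_edges (U', T, T', Q') = (U', T', T, Q')"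

lemma collision_nbrs_subset_collisions_from:
  "collision_nbrs p r H (U, S, S', Q)
    \<subseteq> (\<Union>X\<in>{S, S'}. collisions_from p r H X U Q \<union> swap_edges ` collisions_from p r H X U Q)"
proof
  fix j assume j_nbr: "j \<in> collision_nbrs p r H (U, S, S', Q)"
  obtain U' T T' Q' where j: "j = (U', T, T', Q')"
    by (cases j)
  have j_collision: "(U', T, T', Q') \<in> collisions p r H"
    and slot: "T \<in> {S, S'} \<or> T' \<in> {S, S'}" and meet: "U \<inter> U' \<noteq> {} \<or> Q \<inter> Q' \<noteq> {}"
    using j_nbr by (simp_all add: j)
  have "(U', T', T, Q') \<in> collisions p r H"
    using j_collision by (auto simp: collisions_def)
  then have "(U', T', T, Q') \<in> collisions_from p r H T' U Q"
    using meet by (simp add: collisions_from_def)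
  then have "j \<in> swap_edges ` collisions_from p r H T' U Q"
    by (rule rev_image_eqI) (simp add: j)
  moreover have "j \<in> collisions_from p r H T U Q"
    using j_collision meet by (simp add: collisions_from_def j)
  ultimately show "j \<in> (\<Union>X\<in>{S, S'}. collisions_from p r H X U Q \<union> swap_edges ` collisions_from p r H X U Q)"
    using slot by (elim disjE) auto
qed

lemma card_collisions_from_le:
  assumes H: "uniform_hypergraph r H" and deg: "max_p_degree p H \<le> k"
    and X: "X \<in> H" "U \<subseteq> X" "card U = p" and Q: "Q \<subseteq> {1..r}" "card Q = p"
  shows "card (collisions_from p r H X U Q) \<le> 2 * (p * (r - 1 choose (p - 1))) * k * (r choose p)"
proof -
  define through where "through \<U> \<Q> = (\<lambda>(U', T', Q'). (U', X, T', Q')) ` (SIGMA U':\<U>. {T \<in> H. U' \<subseteq> T} \<times> \<Q>)"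
    for \<U> :: "'a set set" and \<Q> :: "nat set set"
  let ?sub = "{U'. U' \<subseteq> X \<and> card U' = p}" and ?sub_meet = "{U'. U' \<subseteq> X \<and> card U' = p \<and> U \<inter> U' \<noteq> {}}"
  let ?P = "{Q'. Q' \<subseteq> {1..r} \<and> card Q' = p}" and ?P_meet = "{Q'. Q' \<subseteq> {1..r} \<and> card Q' = p \<and> Q \<inter> Q' \<noteq> {}}"
  have "finite X" "card X = r" "finite H"
    using H X(1) by (auto simp: uniform_hypergraph_def)
  have "finite ?sub"
    by (rule finite_subset[of _ "Pow X"]) (use \<open>finite X\<close> in auto)
  moreover have "finite ?P"
    by (rule finite_subset[of _ "Pow {1..r}"]) auto
  ultimately have finite_subsets: "finite ?sub" "finite ?sub_meet" "finite ?P" "finite ?P_meet"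
    by (auto elim: rev_finite_subset)
  have card_through: "card (through \<U> \<Q>) \<le> card \<U> * k * card \<Q>"
    if "\<U> \<subseteq> ?sub" "finite \<U>" "finite \<Q>" for \<U> \<Q>
    unfolding through_def using that X(1)
    by (intro card_collisions_through_le[OF H deg]) (auto simp: vertices_def)
  have through_I: "(U', X, T', Q') \<in> through \<U> \<Q>" if "U' \<in> \<U>" "T' \<in> H" "U' \<subseteq> T'" "Q' \<in> \<Q>"
    for U' T' Q' \<U> \<Q>
    using that by (force simp: through_def)
  have "collisions_from p r H X U Q \<subseteq> through ?sub_meet ?P \<union> through ?sub ?P_meet"
  proof
    fix j assume j_from: "j \<in> collisions_from p r H X U Q"
    obtain U' T T' Q' where j: "j = (U', T, T', Q')"
      by (cases j)
    have "T = X" "U' \<in> ?sub" "T' \<in> H" "U' \<subseteq> T'" "Q' \<in> ?P" "U \<inter> U' \<noteq> {} \<or> Q \<inter> Q' \<noteq> {}"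
      using j_from by (auto simp: j collisions_from_def collisions_def)
    then show "j \<in> through ?sub_meet ?P \<union> through ?sub ?P_meet"
      by (auto simp: j intro: through_I)
  qed
  then have "card (collisions_from p r H X U Q) \<le> card (through ?sub_meet ?P \<union> through ?sub ?P_meet)"
    using \<open>finite H\<close> finite_subsets by (intro card_mono) (auto simp: through_def)
  also have "\<dots> \<le> card (through ?sub_meet ?P) + card (through ?sub ?P_meet)"
    by (rule card_Un_le)
  also have "\<dots> \<le> card ?sub_meet * k * card ?P + card ?sub * k * card ?P_meet"
    using finite_subsets by (intro add_mono card_through) auto
  also have "\<dots> \<le> (p * (r - 1 choose (p - 1))) * k * (r choose p) + (r choose p) * k * (p * (r - 1 choose (p - 1)))"
    using card_subsets_meeting_le[OF \<open>finite X\<close> \<open>card X = r\<close> X(2,3)]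
      card_subsets_meeting_le[of "{1..r}" r Q p] n_subsets[OF \<open>finite X\<close>, of p] n_subsets[of "{1..r}" p] Q
    by (intro add_mono mult_mono) (auto simp: \<open>card X = r\<close>)
  finally show ?thesis
    by (simp add: algebra_simps)
qed

lemma card_collision_nbrs_le:
  assumes H: "uniform_hypergraph r H" and deg: "max_p_degree p H \<le> k" and i: "i \<in> collisions p r H"
  shows "card (collision_nbrs p r H i) \<le> 8 * (p * (r - 1 choose (p - 1))) * k * (r choose p)"
proof -
  obtain U S S' Q where i_def: "i = (U, S, S', Q)"
    by (cases i)
  have edges: "S \<in> H" "S' \<in> H" "U \<subseteq> S" "U \<subseteq> S'" "card U = p" and Q: "Q \<subseteq> {1..r}" "card Q = p"
    using i by (auto simp: i_def collisions_def)
  define B where "B = 2 * (p * (r - 1 choose (p - 1))) * k * (r choose p)"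
  let ?F = "\<lambda>X. collisions_from p r H X U Q"
  have finite_from: "finite (?F X)" for X
    unfolding collisions_from_def by (rule finite_subset[OF _ finite_collisions[OF H]]) auto
  have "card (collision_nbrs p r H i) \<le> card (\<Union>X\<in>{S, S'}. ?F X \<union> swap_edges ` ?F X)"
    unfolding i_def by (rule card_mono[OF _ collision_nbrs_subset_collisions_from]) (use finite_from in auto)
  also have "\<dots> \<le> (\<Sum>X\<in>{S, S'}. card (?F X \<union> swap_edges ` ?F X))"
    by (rule card_UN_le) simp
  also have "\<dots> \<le> (\<Sum>X\<in>{S, S'}. 2 * B)"
  proof (rule sum_mono)
    fix X assume "X \<in> {S, S'}"
    then have "card (?F X) \<le> B"
      unfolding B_def using edges Q by (intro card_collisions_from_le[OF H deg]) auto
    then show "card (?F X \<union> swap_edges ` ?F X) \<le> 2 * B"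
      using card_Un_le[of "?F X" "swap_edges ` ?F X"] card_image_le[OF finite_from[of X], of swap_edges]
      by linarith
  qed
  also have "\<dots> \<le> 4 * B"
    by (simp add: card_insert_if)
  finally show ?thesis
    by (simp add: B_def)
qed

lemma mult_binomial_minus1_le:
  assumes "0 < p" "c * p\<^sup>2 \<le> r"
  shows "c * (p * (r - 1 choose (p - 1))) \<le> r choose p"
proof (cases "r = 0")
  case True
  then show ?thesis
    using assms by simp
next
  case False
  have "r * (c * (p * (r - 1 choose (p - 1)))) = c * p * (p * (r choose p))"
    using times_binomial_minus1_eq[OF assms(1), of r] by (simp add: algebra_simps)
  also have "\<dots> = (c * p\<^sup>2) * (r choose p)"
    by (simp add: power2_eq_square algebra_simps)
  also have "\<dots> \<le> r * (r choose p)"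
    using assms(2) by (rule mult_right_mono) simp
  finally show ?thesis
    using False by simp
qed

lemma two_le_binomial:
  assumes "0 < p" "p < r"
  shows "2 \<le> r choose p"
proof (rule ccontr)
  assume "\<not> 2 \<le> r choose p"
  then have "p * (r choose p) \<le> p * 1"
    by (intro mult_le_mono2) simp
  moreover have "p * (r choose p) = r * (r - 1 choose (p - 1))"
    by (rule times_binomial_minus1_eq[OF assms(1)])
  moreover have "0 < r - 1 choose (p - 1)"
    using assms by (intro zero_less_binomial) simp
  then have "r \<le> r * (r - 1 choose (p - 1))"
    by (metis One_nat_def Suc_leI mult.right_neutral mult_le_mono2)
  ultimately show False
    using assms(2) by linarith
qed

theorem collision_free_orientation_exists:
  assumes H: "uniform_hypergraph r H" and deg: "max_p_degree p H \<le> k"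
    and p: "0 < p" "p < r" and r: "32 * k * p\<^sup>2 \<le> r"
  shows "avoiding (orientations r H) collision_event (collisions p r H) \<noteq> {}"
proof -
  define C where "C = r choose p"
  define d where "d = 8 * (p * (r - 1 choose (p - 1))) * k * C"
  have "2 \<le> C"
    unfolding C_def using two_le_binomial[OF p] .
  have "32 * k * (p * (r - 1 choose (p - 1))) \<le> C"
    unfolding C_def using mult_binomial_minus1_le[OF p(1)] r by simp
  moreover have "4 * d = 32 * k * (p * (r - 1 choose (p - 1))) * C"
    by (simp add: d_def)
  ultimately have "4 * d \<le> C * C"
    by simp
  interpret counting_local_lemma "orientations r H" "collisions p r H" collision_event
    "collision_nbrs p r H" d "1 / (real C)\<^sup>2"
  proof
    show "finite (orientations r H)"
      by (rule finite_orientations[OF H])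
    show "finite (collisions p r H)"
      by (rule finite_collisions[OF H])
    then show "finite (collision_nbrs p r H i)" for i
      by (rule finite_subset[OF collision_nbrs_subset])
    show "card (collision_nbrs p r H i) \<le> d" if "i \<in> collisions p r H" for i
      unfolding d_def C_def by (rule card_collision_nbrs_le[OF H deg that])
    show "card (collision_event i \<inter> avoiding (orientations r H) collision_event J)
        \<le> 1 / (real C)\<^sup>2 * card (avoiding (orientations r H) collision_event J)"
      if "i \<in> collisions p r H" "J \<subseteq> collisions p r H - collision_nbrs p r H i - {i}" for i J
      unfolding C_def using that by (intro collision_event_conditional_bound[OF H]) auto
    show "0 \<le> 1 / (real C)\<^sup>2"
      by simp
    have "4 * real d \<le> (real C)\<^sup>2"
      using \<open>4 * d \<le> C * C\<close> by (simp add: power2_eq_square flip: of_nat_mult of_nat_le_iff)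
    then show "4 * (1 / (real C)\<^sup>2) * d \<le> 1"
      using \<open>2 \<le> C\<close> by (simp add: field_simps)
    have "2\<^sup>2 \<le> (real C)\<^sup>2"
      using \<open>2 \<le> C\<close> by (intro power_mono) auto
    then show "2 * (1 / (real C)\<^sup>2) < 1"
      by (simp add: divide_less_eq)
  qed
  show ?thesis
    using avoiding_nonempty orientations_nonempty[OF H] by blast
qed

lemma pos_degree_le_1_if_collision_free:
  assumes "finite H" and \<sigma>: "\<sigma> \<in> avoiding \<Omega> collision_event (collisions p r H)"
    and "P \<subseteq> {1..r}" "card P = p" "card U = p"
  shows "pos_degree H \<sigma> P U \<le> 1"
proof -
  have "S1 = S2" if "S1 \<in> {S \<in> H. U \<subseteq> S \<and> \<sigma> S ` U = P}" "S2 \<in> {S \<in> H. U \<subseteq> S \<and> \<sigma> S ` U = P}"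
    for S1 S2
  proof (rule ccontr)
    assume "S1 \<noteq> S2"
    then have "(U, S1, S2, P) \<in> collisions p r H"
      using that assms by (auto simp: collisions_def)
    moreover have "\<sigma> \<in> collision_event (U, S1, S2, P)"
      using that by simp
    ultimately show False
      using \<sigma> by (auto simp: avoiding_def)
  qed
  moreover have "finite {S \<in> H. U \<subseteq> S \<and> \<sigma> S ` U = P}"
    using \<open>finite H\<close> by simp
  ultimately have "card {S \<in> H. U \<subseteq> S \<and> \<sigma> S ` U = P} \<le> Suc 0"
    by (simp add: card_le_Suc0_iff_eq)
  then show ?thesis
    by (simp add: pos_degree_def)
qed

lemma p_equitable_if_collision_free:
  assumes "finite H" "\<sigma> \<in> avoiding \<Omega> collision_event (collisions p r H)"
  shows "p_equitable p r H \<sigma>"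
  unfolding p_equitable_def
proof (intro allI impI)
  fix U P P'
  assume "U \<subseteq> vertices H \<and> P \<subseteq> {1..r} \<and> P' \<subseteq> {1..r} \<and> card U = p \<and> card P = p \<and> card P' = p"
  then have "pos_degree H \<sigma> P U \<le> 1" "pos_degree H \<sigma> P' U \<le> 1"
    using pos_degree_le_1_if_collision_free[OF assms] by auto
  then show "\<bar>int (pos_degree H \<sigma> P U) - int (pos_degree H \<sigma> P' U)\<bar> \<le> 1"
    by linarith
qed

theorem theorem1:
  fixes p k :: nat
  assumes "p > 0" and "k > 0"
  shows "\<exists>r0. \<forall>r\<ge>r0. \<forall>H :: nat set set.
           uniform_hypergraph r H \<and> max_p_degree p H \<le> k \<longrightarrow>
           (\<exists>\<sigma>. orientation r H \<sigma> \<and> p_equitable p r H \<sigma>)"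
proof (intro exI[of _ "32 * k * p\<^sup>2"] allI impI)
  fix r :: nat and H :: "nat set set"
  assume r: "32 * k * p\<^sup>2 \<le> r" and "uniform_hypergraph r H \<and> max_p_degree p H \<le> k"
  then have H: "uniform_hypergraph r H" and deg: "max_p_degree p H \<le> k"
    by auto
  have "1 \<le> k * p"
    using assms by (simp add: Suc_le_eq)
  then have "p * 1 < p * (32 * k * p)"
    using assms by (intro mult_less_mono2) linarith+
  moreover have "p * (32 * k * p) = 32 * k * p\<^sup>2"
    by (simp add: power2_eq_square)
  ultimately have "p < r"
    using r by linarith
  then obtain \<sigma> where \<sigma>: "\<sigma> \<in> avoiding (orientations r H) collision_event (collisions p r H)"
    using collision_free_orientation_exists[OF H deg \<open>p > 0\<close> _ r] by blast
  then have "orientation r H \<sigma>"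
    by (auto simp: avoiding_def intro: orientation_if_in_orientations)
  moreover have "p_equitable p r H \<sigma>"
    using H \<sigma> by (intro p_equitable_if_collision_free) (auto simp: uniform_hypergraph_def)
  ultimately show "\<exists>\<sigma>. orientation r H \<sigma> \<and> p_equitable p r H \<sigma>"
    by blast
qed

end
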